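(* Let $S$ be epsilon-strongly graded and let $r$ be a minimal element of $B(\mathcal{E}_G)^*$. Then the following are equivalent: (i) $r$ is $\gamma$-invariant, i.e. $\gamma_g(r\epsilon_{g^{-1}})=r\epsilon_g$ for all $g\in G$; (ii) $r\in Z(S)$; (iii) $N(r)=\{g\in G: r\epsilon_g=r\}$ is a subgroup of $G$.
   Context: $G$ is a group with identity $e$; $S=\bigoplus_{g\in G}S_g$ is an associative unital ring graded by $G$, $R=S_e$, $XY$ denotes finite sums of products. $S$ is epsilon-strongly graded: for each $g\in G$ the ideal $S_gS_{g^{-1}}$ of $R$ has an identity element $\epsilon_g$ satisfying $\epsilon_gs=s=s\epsilon_{g^{-1}}$ for all $s\in S_g$; $\epsilon_e=1_S$. Each $\epsilon_g$ is an idempotent in the center $Z(R)$ of $R$. For each $g$ fix $n_g\in\mathbb{N}$, $u_g^{(i)}\in S_g$, $v_{g^{-1}}^{(i)}\in S_{g^{-1}}$ with $\sum_{i=1}^{n_g}u_g^{(i)}v_{g^{-1}}^{(i)}=\epsilon_g$ (with $n_e=1$, $u_e^{(1)}=v_e^{(1)}=1$), and define $\gamma_g:S\to S$, $\gamma_g(s)=\sum_{i=1}^{n_g}u_g^{(i)}sv_{g^{-1}}^{(i)}$. $\mathcal{E}_G=\{\epsilon_g:g\in G\}$, $B(\mathcal{E}_G)$ is the multiplicative (Boolean) semigroup generated by $\mathcal{E}_G$, and $B(\mathcal{E}_G)^*=B(\mathcal{E}_G)\setminus\{0\}$, partially ordered by $a\le b$ iff $a=ab$. $Z(S)$ denotes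 the center of $S$. *)

theory Defs
  imports Main
begin

text \<open>The group G is a type of class group_add (operation +, identity 0, inverse uminus;
  not assumed commutative).\<close>

definition add_subgroup :: "'a::ring_1 set \<Rightarrow> bool" where
  "add_subgroup A \<longleftrightarrow> 0 \<in> A \<and> (\<forall>x\<in>A. \<forall>y\<in>A. x + y \<in> A) \<and> (\<forall>x\<in>A. - x \<in> A)"

definition graded_ring :: "('g::group_add \<Rightarrow> 'a::ring_1 set) \<Rightarrow> bool" where
  "graded_ring Sg \<longleftrightarrow>
     (\<forall>g. add_subgroup (Sg g)) \<and>
     (\<forall>g h. \<forall>x\<in>Sg g. \<forall>y\<in>Sg h. x * y \<in> Sg (g + h)) \<and>
     (\<forall>s. \<exists>!f. (\<forall>g. f g \<in> Sg g) \<and> finite {g. f g \<noteq> 0} \<and> s = (\<Sum>g\<in>{g. f g \<noteq> 0}. f g))"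

definition prodset :: "'a::ring_1 set \<Rightarrow> 'a set \<Rightarrow> 'a set" where
  "prodset X Y = {(\<Sum>i<(n::nat). x i * y i) | n x y. \<forall>i<n. x i \<in> X \<and> y i \<in> Y}"

definition is_identity_of :: "'a::ring_1 set \<Rightarrow> 'a \<Rightarrow> bool" where
  "is_identity_of I e \<longleftrightarrow> e \<in> I \<and> (\<forall>x\<in>I. e * x = x \<and> x * e = x)"

definition eps :: "('g::group_add \<Rightarrow> 'a::ring_1 set) \<Rightarrow> 'g \<Rightarrow> 'a" where
  "eps Sg g = (THE e. is_identity_of (prodset (Sg g) (Sg (- g))) e)"

definition epsilon_strongly_graded :: "('g::group_add \<Rightarrow> 'a::ring_1 set) \<Rightarrow> bool" where
  "epsilon_strongly_graded Sg \<longleftrightarrow> graded_ring Sg \<and>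
     (\<forall>g. \<exists>e. is_identity_of (prodset (Sg g) (Sg (- g))) e) \<and>
     (\<forall>g. \<forall>s\<in>Sg g. eps Sg g * s = s \<and> s * eps Sg (- g) = s)"

definition gamma :: "('g \<Rightarrow> nat) \<Rightarrow> ('g \<Rightarrow> nat \<Rightarrow> 'a::ring_1) \<Rightarrow> ('g \<Rightarrow> nat \<Rightarrow> 'a) \<Rightarrow> 'g \<Rightarrow> 'a \<Rightarrow> 'a" where
  "gamma n u v g s = (\<Sum>i<n g. u g i * s * v g i)"

definition B_E :: "('g::group_add \<Rightarrow> 'a::ring_1 set) \<Rightarrow> 'a set" where
  "B_E Sg = {foldr (*) (map (eps Sg) gs) 1 | gs. gs \<noteq> []}"

definition B_E_star :: "('g::group_add \<Rightarrow> 'a::ring_1 set) \<Rightarrow> 'a set" where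
  "B_E_star Sg = B_E Sg - {0}"

definition bool_le :: "'a::ring_1 \<Rightarrow> 'a \<Rightarrow> bool" where
  "bool_le a b \<longleftrightarrow> a = a * b"

definition minimal_in :: "'a::ring_1 set \<Rightarrow> 'a \<Rightarrow> bool" where
  "minimal_in A r \<longleftrightarrow> r \<in> A \<and> (\<forall>a\<in>A. bool_le a r \<longrightarrow> a = r)"

definition center :: "'a::ring_1 set" where
  "center = {z. \<forall>s. z * s = s * z}"

definition N_set :: "('g::group_add \<Rightarrow> 'a::ring_1 set) \<Rightarrow> 'a \<Rightarrow> 'g set" where
  "N_set Sg r = {g. r * eps Sg g = r}"

definition is_subgroup :: "'g::group_add set \<Rightarrow> bool" where
  "is_subgroup H \<longleftrightarrow> 0 \<in> H \<and> (\<forall>x\<in>H. \<forall>y\<in>H. x + y \<in> H) \<and> (\<forall>x\<in>H. - x \<in> H)"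

end

(*
  Everything rests on the commutation rule s \<epsilon>_h = \<epsilon>_(g+h) s for s \<in> S_g. It makes the
  \<epsilon>_g pairwise commuting idempotents of S_e, and it lets a homogeneous s of degree g move
  past a product \<epsilon>_g1 ... \<epsilon>_gk at the price of shifting every index by g. Minimality of r
  forces r \<epsilon>_k \<in> {0, r}, i.e. N(r) = {k. r \<epsilon>_k \<noteq> 0}.

  (i) <-> (ii): r commutes with S_e, hence \<gamma>_g(r) s = s r for s \<in> S_g, while
  r s = r \<epsilon>_g s = \<gamma>_g(r \<epsilon>_(-g)) s under (i).
  (ii) -> (iii): for central r one has r \<epsilon>_x = \<gamma>_x(r \<epsilon>_(-x)) and \<gamma>_x(r \<epsilon>_y) = r \<epsilon>_(x+y) \<epsilon>_x,
  which give closure of N(r) under inverses and sums.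
  (iii) -> (ii): for g \<in> N(r), shifting r = \<epsilon>_g1 ... \<epsilon>_gk past s \<in> S_g by g or -g produces
  products over N(r), which r absorbs; so r s r equals both r s and s r. For g \<notin> N(r) both
  r s = r \<epsilon>_g s and s r = s \<epsilon>_(-g) r vanish.
*)
theory Submission
  imports Defs
begin

lemma mem_N_set [simp]: "g \<in> N_set Sg r \<longleftrightarrow> r * eps Sg g = r"
  by (simp add: N_set_def)

lemma in_center_if_commute_homogeneous:
  assumes "graded_ring Sg"
    and "\<And>g s. s \<in> Sg g \<Longrightarrow> z * s = s * z"
  shows "z \<in> center"
  unfolding center_def
proof (intro CollectI allI)
  fix s
  from assms(1) obtain f where f: "\<forall>g. f g \<in> Sg g" "s = (\<Sum>g\<in>{g. f g \<noteq> 0}. f g)"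
    unfolding graded_ring_def by blast
  have "z * s = (\<Sum>g\<in>{g. f g \<noteq> 0}. z * f g)" using f(2) by (simp add: sum_distrib_left)
  also have "\<dots> = (\<Sum>g\<in>{g. f g \<noteq> 0}. f g * z)" using f(1) assms(2) by (intro sum.cong) auto
  also have "\<dots> = s * z" using f(2) by (simp add: sum_distrib_right)
  finally show "z * s = s * z" .
qed

locale eps_graded =
  fixes Sg :: "'g::group_add \<Rightarrow> 'a::ring_1 set"
  assumes eps_strongly_graded: "epsilon_strongly_graded Sg"
begin

lemma graded: "graded_ring Sg"
  using eps_strongly_graded unfolding epsilon_strongly_graded_def by blast

lemma graded_mult_mem: "x \<in> Sg g \<Longrightarrow> y \<in> Sg h \<Longrightarrow> x * y \<in> Sg (g + h)"
  using graded unfolding graded_ring_def by blast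

lemma eps_mult_homogeneous: "s \<in> Sg g \<Longrightarrow> eps Sg g * s = s"
  and homogeneous_mult_eps_uminus: "s \<in> Sg g \<Longrightarrow> s * eps Sg (- g) = s"
  using eps_strongly_graded unfolding epsilon_strongly_graded_def by blast+

lemma sum_mem_graded: "(\<And>i. i < (m::nat) \<Longrightarrow> f i \<in> Sg g) \<Longrightarrow> (\<Sum>i<m. f i) \<in> Sg g"
proof (induction m)
  case 0
  show ?case using graded unfolding graded_ring_def add_subgroup_def by simp
next
  case (Suc m)
  then show ?case using graded unfolding graded_ring_def add_subgroup_def by simp
qed

lemma eps_is_identity: "is_identity_of (prodset (Sg g) (Sg (- g))) (eps Sg g)"
proof -
  let ?I = "prodset (Sg g) (Sg (- g))"
  obtain e where e: "is_identity_of ?I e"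
    using eps_strongly_graded unfolding epsilon_strongly_graded_def by blast
  have "e' = e" if "is_identity_of ?I e'" for e'
  proof -
    have "e' = e' * e" using e that unfolding is_identity_of_def by metis
    also have "\<dots> = e" using e that unfolding is_identity_of_def by metis
    finally show ?thesis .
  qed
  with e show ?thesis unfolding eps_def by (rule theI)
qed

lemma eps_decomposition:
  obtains m :: nat and x y where "\<And>i. i < m \<Longrightarrow> x i \<in> Sg g \<and> y i \<in> Sg (- g)"
    and "eps Sg g = (\<Sum>i<m. x i * y i)"
proof -
  have "eps Sg g \<in> prodset (Sg g) (Sg (- g))"
    using eps_is_identity unfolding is_identity_of_def by blast
  then show thesis using that unfolding prodset_def by blast
qed

lemma eps_mem_zero: "eps Sg g \<in> Sg 0"
proof -
  obtain m :: nat and x y where xy: "\<And>i. i < m \<Longrightarrow> x i \<in> Sg g \<and> y i \<in> Sg (- g)"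
    and eps: "eps Sg g = (\<Sum>i<m. x i * y i)"
    using eps_decomposition[of g] by blast
  have "(\<Sum>i<m. x i * y i) \<in> Sg (g + - g)"
    by (rule sum_mem_graded) (use xy graded_mult_mem in blast)
  then show ?thesis by (simp add: eps)
qed

lemma eps_idem: "eps Sg g * eps Sg g = eps Sg g"
proof -
  obtain m :: nat and x y where xy: "\<And>i. i < m \<Longrightarrow> x i \<in> Sg g \<and> y i \<in> Sg (- g)"
    and eps: "eps Sg g = (\<Sum>i<m. x i * y i)"
    using eps_decomposition[of g] by blast
  have "eps Sg g * eps Sg g = (\<Sum>i<m. eps Sg g * x i * y i)"
    by (subst (2) eps) (simp add: sum_distrib_left mult.assoc)
  also have "\<dots> = (\<Sum>i<m. x i * y i)"
    using xy by (intro sum.cong) (simp_all add: eps_mult_homogeneous)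
  finally show ?thesis using eps by simp
qed

text \<open>Both sides equal \<open>\<epsilon>\<^sub>g\<^sub>+\<^sub>h s \<epsilon>\<^sub>h\<close>: expand \<open>\<epsilon>\<^sub>h\<close> on the left and \<open>\<epsilon>\<^sub>g\<^sub>+\<^sub>h\<close> on the right.\<close>
lemma homogeneous_mult_eps:
  assumes s: "s \<in> Sg g"
  shows "s * eps Sg h = eps Sg (g + h) * s"
proof -
  obtain m :: nat and x y where xy: "\<And>i. i < m \<Longrightarrow> x i \<in> Sg h \<and> y i \<in> Sg (- h)"
    and eps_h: "eps Sg h = (\<Sum>i<m. x i * y i)"
    using eps_decomposition[of h] by blast
  obtain m' :: nat and x' y'
    where xy': "\<And>i. i < m' \<Longrightarrow> x' i \<in> Sg (g + h) \<and> y' i \<in> Sg (- (g + h))"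
    and eps_gh: "eps Sg (g + h) = (\<Sum>i<m'. x' i * y' i)"
    using eps_decomposition[of "g + h"] by blast
  have "s * eps Sg h = (\<Sum>i<m. s * x i * y i)"
    by (simp add: eps_h sum_distrib_left mult.assoc)
  also have "\<dots> = (\<Sum>i<m. eps Sg (g + h) * (s * x i) * y i)"
    using xy s by (intro sum.cong) (auto simp: eps_mult_homogeneous graded_mult_mem)
  also have "\<dots> = eps Sg (g + h) * s * eps Sg h"
    by (simp add: eps_h sum_distrib_left mult.assoc)
  finally have left: "s * eps Sg h = eps Sg (g + h) * s * eps Sg h" .
  have y's: "y' i * s \<in> Sg (- h)" if "i < m'" for i
    using graded_mult_mem[OF conjunct2[OF xy'[OF that]] s] by (simp add: minus_add add.assoc)
  have "eps Sg (g + h) * s = (\<Sum>i<m'. x' i * (y' i * s))"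
    by (simp add: eps_gh sum_distrib_right mult.assoc)
  also have "\<dots> = (\<Sum>i<m'. x' i * (y' i * s * eps Sg h))"
    using homogeneous_mult_eps_uminus[OF y's] by (intro sum.cong) simp_all
  also have "\<dots> = eps Sg (g + h) * s * eps Sg h"
    by (simp add: eps_gh sum_distrib_right mult.assoc)
  finally show ?thesis using left by simp
qed

lemma eps_commute_zero: "x \<in> Sg 0 \<Longrightarrow> x * eps Sg h = eps Sg h * x"
  using homogeneous_mult_eps[of x 0 h] by simp

lemma eps_commute: "eps Sg g * eps Sg h = eps Sg h * eps Sg g"
  using eps_commute_zero[OF eps_mem_zero] .

definition eps_prod :: "'g list \<Rightarrow> 'a" where
  "eps_prod gs = foldr (*) (map (eps Sg) gs) 1"

lemma eps_prod_Nil [simp]: "eps_prod [] = 1"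
  and eps_prod_Cons [simp]: "eps_prod (g # gs) = eps Sg g * eps_prod gs"
  by (simp_all add: eps_prod_def)

lemma B_E_eq: "B_E Sg = eps_prod ` {gs. gs \<noteq> []}"
  unfolding B_E_def eps_prod_def by blast

lemma eps_prod_mem_zero: "gs \<noteq> [] \<Longrightarrow> eps_prod gs \<in> Sg 0"
proof (induction gs)
  case (Cons g gs)
  then show ?case
    using graded_mult_mem[of "eps Sg g" 0 "eps_prod gs" 0] eps_mem_zero[of g]
    by (cases "gs = []") auto
qed simp

lemma eps_prod_commute_zero: "x \<in> Sg 0 \<Longrightarrow> x * eps_prod gs = eps_prod gs * x"
proof (induction gs)
  case (Cons g gs)
  have "x * eps_prod (g # gs) = eps Sg g * x * eps_prod gs"
    using eps_commute_zero[OF Cons.prems] by (simp add: mult.assoc[symmetric])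
  also have "\<dots> = eps_prod (g # gs) * x"
    using Cons by (simp add: mult.assoc)
  finally show ?case .
qed simp

lemma eps_prod_commute_eps: "eps_prod gs * eps Sg h = eps Sg h * eps_prod gs"
  using eps_prod_commute_zero[OF eps_mem_zero] by simp

lemma eps_prod_idem: "eps_prod gs * eps_prod gs = eps_prod gs"
proof (induction gs)
  case (Cons g gs)
  have "eps_prod (g # gs) * eps_prod (g # gs) = eps Sg g * (eps_prod gs * eps Sg g) * eps_prod gs"
    by (simp add: mult.assoc)
  also have "\<dots> = (eps Sg g * eps Sg g) * (eps_prod gs * eps_prod gs)"
    by (simp add: eps_prod_commute_eps mult.assoc)
  finally show ?case using Cons by (simp add: eps_idem)
qed simp

lemma eps_prod_mult_eps_mem: "h \<in> set gs \<Longrightarrow> eps_prod gs * eps Sg h = eps_prod gs"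
proof (induction gs)
  case (Cons g gs)
  show ?case
  proof (cases "h = g")
    case True
    have "eps_prod (g # gs) * eps Sg g = (eps Sg g * eps Sg g) * eps_prod gs"
      by (simp add: eps_prod_commute_eps mult.assoc)
    then show ?thesis using True by (simp add: eps_idem)
  next
    case False
    then show ?thesis using Cons by (simp add: mult.assoc)
  qed
qed simp

lemma homogeneous_mult_eps_prod:
  "s \<in> Sg g \<Longrightarrow> s * eps_prod gs = eps_prod (map ((+) g) gs) * s"
proof (induction gs)
  case (Cons h gs)
  have "s * eps_prod (h # gs) = eps Sg (g + h) * s * eps_prod gs"
    using homogeneous_mult_eps[OF Cons.prems] by (simp add: mult.assoc[symmetric])
  also have "\<dots> = eps_prod (map ((+) g) (h # gs)) * s"
    using Cons by (simp add: mult.assoc)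
  finally show ?case .
qed simp

lemma eps_prod_mult_homogeneous:
  assumes "s \<in> Sg g"
  shows "eps_prod gs * s = s * eps_prod (map ((+) (- g)) gs)"
proof -
  have "map ((+) g) (map ((+) (- g)) gs) = gs"
    by (simp add: comp_def add.assoc[symmetric])
  then show ?thesis using homogeneous_mult_eps_prod[OF assms, of "map ((+) (- g)) gs"] by simp
qed

lemma mult_eps_prod_absorb: "(\<And>h. h \<in> set gs \<Longrightarrow> r * eps Sg h = r) \<Longrightarrow> r * eps_prod gs = r"
  by (induction gs) (auto simp: mult.assoc[symmetric])

lemma eps_prod_mult_absorb: "(\<And>h. h \<in> set gs \<Longrightarrow> eps Sg h * r = r) \<Longrightarrow> eps_prod gs * r = r"
  by (induction gs) (auto simp: mult.assoc)

lemma minimal_eps_prod: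
  assumes "minimal_in (B_E_star Sg) r"
  obtains gs where "gs \<noteq> []" and "r = eps_prod gs" and "r \<noteq> 0"
  using assms unfolding minimal_in_def B_E_star_def B_E_eq by blast

text \<open>Every \<open>r \<epsilon>\<^sub>k\<close> lies below \<open>r\<close> in \<open>B(E\<^sub>G)\<close>, so minimality leaves only two values for it.\<close>
lemma minimal_mult_eps_cases:
  assumes min: "minimal_in (B_E_star Sg) r"
  shows "r * eps Sg k = 0 \<or> r * eps Sg k = r"
proof -
  obtain gs where "gs \<noteq> []" and r: "r = eps_prod gs"
    using min by (rule minimal_eps_prod)
  have "r * eps Sg k \<in> B_E Sg"
    unfolding B_E_eq r by (rule image_eqI[of _ _ "k # gs"]) (simp_all add: eps_prod_commute_eps)
  moreover have "bool_le (r * eps Sg k) r"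
    unfolding bool_le_def r by (simp add: eps_prod_commute_eps eps_prod_idem mult.assoc)
  ultimately show ?thesis
    using min unfolding minimal_in_def B_E_star_def by blast
qed

lemma central_if_N_set_subgroup:
  assumes subgroup: "is_subgroup (N_set Sg r)"
    and r: "r = eps_prod gs"
    and cases: "\<And>k. r * eps Sg k = 0 \<or> r * eps Sg k = r"
  shows "r \<in> center"
proof (rule in_center_if_commute_homogeneous[OF graded])
  fix g s assume s: "s \<in> Sg g"
  have gs_N: "h \<in> N_set Sg r" if "h \<in> set gs" for h
    using eps_prod_mult_eps_mem[OF that] r by simp
  show "r * s = s * r"
  proof (cases "g \<in> N_set Sg r")
    case True
    then have "- g \<in> N_set Sg r" using subgroup unfolding is_subgroup_def by blast
    have "r * s * r = r * s"
    proof -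
      have "r * eps_prod (map ((+) g) gs) = r"
        using gs_N True subgroup unfolding is_subgroup_def by (intro mult_eps_prod_absorb) auto
      then show ?thesis
        using homogeneous_mult_eps_prod[OF s, of gs] r by (metis mult.assoc)
    qed
    moreover have "r * s * r = s * r"
    proof -
      have "eps_prod (map ((+) (- g)) gs) * r = r"
        using gs_N \<open>- g \<in> N_set Sg r\<close> subgroup eps_prod_commute_eps r
        unfolding is_subgroup_def by (intro eps_prod_mult_absorb) auto
      then show ?thesis
        using eps_prod_mult_homogeneous[OF s, of gs] r by (metis mult.assoc)
    qed
    ultimately show ?thesis by simp
  next
    case False
    then have "- g \<notin> N_set Sg r" using subgroup unfolding is_subgroup_def by force
    have "r * s = r * eps Sg g * s" using eps_mult_homogeneous[OF s] by (simp add: mult.assoc)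
    also have "\<dots> = 0" using False cases[of g] by simp
    finally have "r * s = 0" .
    moreover have "s * r = s * (r * eps Sg (- g))"
      using homogeneous_mult_eps_uminus[OF s] eps_prod_commute_eps r by (metis mult.assoc)
    moreover have "r * eps Sg (- g) = 0" using \<open>- g \<notin> N_set Sg r\<close> cases by auto
    ultimately show ?thesis by simp
  qed
qed

end

locale eps_graded_decomposition = eps_graded Sg for Sg :: "'g::group_add \<Rightarrow> 'a::ring_1 set" +
  fixes n :: "'g \<Rightarrow> nat" and u v :: "'g \<Rightarrow> nat \<Rightarrow> 'a"
  assumes uv_mem: "\<And>g i. i < n g \<Longrightarrow> u g i \<in> Sg g \<and> v g i \<in> Sg (- g)"
    and uv_sum: "\<And>g. (\<Sum>i<n g. u g i * v g i) = eps Sg g"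
begin

lemma gamma_one: "gamma n u v g 1 = eps Sg g"
  by (simp add: gamma_def uv_sum)

lemma gamma_mult_eps_uminus: "gamma n u v g (x * eps Sg (- g)) = gamma n u v g x"
  unfolding gamma_def using uv_mem eps_mult_homogeneous
  by (intro sum.cong) (simp_all add: mult.assoc)

lemma gamma_central_mult: "z \<in> center \<Longrightarrow> gamma n u v g (z * x) = z * gamma n u v g x"
  unfolding gamma_def center_def by (simp add: sum_distrib_left mult.assoc)

lemma gamma_eps: "gamma n u v g (eps Sg h) = eps Sg (g + h) * eps Sg g"
proof -
  have "gamma n u v g (eps Sg h) = (\<Sum>i<n g. eps Sg (g + h) * u g i * v g i)"
    unfolding gamma_def
    by (intro sum.cong refl) (simp add: homogeneous_mult_eps[OF uv_mem[THEN conjunct1]])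
  also have "\<dots> = eps Sg (g + h) * eps Sg g"
    by (simp add: uv_sum[symmetric] sum_distrib_left mult.assoc)
  finally show ?thesis .
qed

text \<open>Each \<open>v\<^sub>i s\<close> has degree \<open>0\<close>, so it can be moved past \<open>x\<close>; the sum then
  collapses to \<open>\<epsilon>\<^sub>g s = s\<close>.\<close>
lemma gamma_mult_homogeneous:
  assumes x: "\<And>y. y \<in> Sg 0 \<Longrightarrow> y * x = x * y"
    and s: "s \<in> Sg g"
  shows "gamma n u v g x * s = s * x"
proof -
  have "gamma n u v g x * s = (\<Sum>i<n g. u g i * (x * (v g i * s)))"
    by (simp add: gamma_def sum_distrib_right mult.assoc)
  also have "\<dots> = (\<Sum>i<n g. u g i * v g i * s * x)"
  proof (intro sum.cong refl)
    fix i assume "i \<in> {..<n g}"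
    then have "v g i * s \<in> Sg (- g + g)" using uv_mem s graded_mult_mem by blast
    then have "x * (v g i * s) = v g i * s * x" using x by simp
    then show "u g i * (x * (v g i * s)) = u g i * v g i * s * x"
      by (simp add: mult.assoc)
  qed
  also have "\<dots> = s * x"
    by (simp add: sum_distrib_right[symmetric] uv_sum eps_mult_homogeneous[OF s])
  finally show ?thesis .
qed

lemma gamma_invariant_if_central:
  "z \<in> center \<Longrightarrow> gamma n u v g (z * eps Sg (- g)) = z * eps Sg g"
  using gamma_central_mult[of z g 1] by (simp add: gamma_mult_eps_uminus gamma_one)

lemma central_if_gamma_invariant:
  assumes r: "\<And>y. y \<in> Sg 0 \<Longrightarrow> y * r = r * y"
    and invariant: "\<forall>g. gamma n u v g (r * eps Sg (- g)) = r * eps Sg g"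
  shows "r \<in> center"
proof (rule in_center_if_commute_homogeneous[OF graded])
  fix g s assume s: "s \<in> Sg g"
  have "r * s = r * eps Sg g * s" using eps_mult_homogeneous[OF s] by (simp add: mult.assoc)
  also have "\<dots> = gamma n u v g r * s" using invariant by (simp add: gamma_mult_eps_uminus)
  also have "\<dots> = s * r" using gamma_mult_homogeneous[OF r s] .
  finally show "r * s = s * r" .
qed

lemma N_set_subgroup_if_central:
  assumes central: "r \<in> center" and "r \<in> Sg 0" and "r \<noteq> 0"
    and cases: "\<And>k. r * eps Sg k = 0 \<or> r * eps Sg k = r"
  shows "is_subgroup (N_set Sg r)"
  unfolding is_subgroup_def
proof (intro conjI ballI)
  show "0 \<in> N_set Sg r" using homogeneous_mult_eps_uminus[OF \<open>r \<in> Sg 0\<close>] by simp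
next
  fix x y assume "x \<in> N_set Sg r" "y \<in> N_set Sg r"
  then have "r = gamma n u v x (r * eps Sg y)"
    using gamma_central_mult[OF central, of x 1] by (simp add: gamma_one)
  also have "\<dots> = r * eps Sg (x + y) * eps Sg x"
    by (simp add: gamma_central_mult[OF central] gamma_eps mult.assoc)
  also have "\<dots> = r * eps Sg (x + y)"
    using \<open>x \<in> N_set Sg r\<close> by (metis eps_commute mem_N_set mult.assoc)
  finally show "x + y \<in> N_set Sg r" by simp
next
  fix x assume "x \<in> N_set Sg r"
  then have "r = gamma n u v x (r * eps Sg (- x))"
    using gamma_invariant_if_central[OF central, of x] by simp
  then have "r * eps Sg (- x) \<noteq> 0" using \<open>r \<noteq> 0\<close> by (auto simp: gamma_def)
  then show "- x \<in> N_set Sg r" using cases[of "- x"] by simp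
qed

end

theorem mainTheorem8:
  fixes Sg :: "'g::group_add \<Rightarrow> 'a::ring_1 set"
    and n :: "'g \<Rightarrow> nat" and u v :: "'g \<Rightarrow> nat \<Rightarrow> 'a" and r :: 'a
  assumes esg: "epsilon_strongly_graded Sg"
    and uv_mem: "\<And>g i. i < n g \<Longrightarrow> u g i \<in> Sg g \<and> v g i \<in> Sg (- g)"
    and uv_sum: "\<And>g. (\<Sum>i<n g. u g i * v g i) = eps Sg g"
    and n0: "n 0 = 1" and u0: "u 0 0 = 1" and v0: "v 0 0 = 1"
    and rmin: "minimal_in (B_E_star Sg) r"
  shows "((\<forall>g. gamma n u v g (r * eps Sg (- g)) = r * eps Sg g) \<longleftrightarrow> r \<in> center)
       \<and> (r \<in> center \<longleftrightarrow> is_subgroup (N_set Sg r))"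
proof -
  interpret eps_graded_decomposition Sg n u v
    by unfold_locales (fact esg uv_mem uv_sum)+
  obtain gs where "gs \<noteq> []" and r: "r = eps_prod gs" and "r \<noteq> 0"
    using rmin by (rule minimal_eps_prod)
  have "r \<in> Sg 0" using eps_prod_mem_zero[OF \<open>gs \<noteq> []\<close>] r by simp
  have commute_zero: "\<And>y. y \<in> Sg 0 \<Longrightarrow> y * r = r * y"
    using eps_prod_commute_zero r by simp
  have cases: "\<And>k. r * eps Sg k = 0 \<or> r * eps Sg k = r"
    using minimal_mult_eps_cases[OF rmin] .
  show ?thesis
    using gamma_invariant_if_central central_if_gamma_invariant[OF commute_zero]
      N_set_subgroup_if_central[OF _ \<open>r \<in> Sg 0\<close> \<open>r \<noteq> 0\<close> cases]
      central_if_N_set_subgroup[OF _ r cases]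
    by blast
qed

end
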